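(* Let $M$ be a connected one-manifold (one of $\mathbb{R}$, $[0,1)$, $[0,1]$, $S^1$) and let $\{I_i \subset M : i \in \mathbb{Z}\}$ be a family of pairwise disjoint open intervals of finite length such that $U = \bigcup_i I_i$ is dense in $M$. Let $l_i$ denote the length of $I_i$. Let $l_i' > 0$ be real numbers such that whenever $S \subset \mathbb{Z}$ is such that $\bigcup_{i\in S} I_i$ is contained in some bounded interval, $\sum_{i \in S} l_i' < \infty$ (in particular this holds if $\sum_{i\in\mathbb{Z}} l_i' < \infty$). Then there exists a homeomorphism $\phi$ of $M$ onto its image $\phi(M)$ (a one-manifold of the same type, with its Euclidean length) such that for each $i$ the length of $\phi(I_i)$ is $l_i'$, and $m(\phi(C)) = 0$, where $C = M \setminus U$ and $m$ denotes Lebesgue measure.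
   Context: Lengths and Lebesgue measure on $M$ and on $\phi(M)$ refer to the standard Euclidean length (on a circle, arc length). *)

theory Defs
  imports "HOL-Analysis.Analysis"
begin

text \<open>The three connected one-manifolds realised as subsets of the real line:
  the line, the half-open interval [0,1) and the closed interval [0,1].
  The circle S^1 is realised as the unit circle in the complex plane.\<close>

definition line_models :: "real set set" where
  "line_models = {UNIV, {0..<1}, {0..1}}"

definition circle_measure :: "real \<Rightarrow> complex measure" where
  "circle_measure r = distr (restrict_space lborel {0..<2*pi*r}) borel (\<lambda>s. of_real r * cis (s / r))"

end

theory Submission
  imports Defs
begin

text \<open>Give the gap \<open>I\<^sub>i\<close> the constant density \<open>l\<^sub>i' / |I\<^sub>i|\<close> and the rest of the line
  density 0. The summability hypothesis makes this density locally integrable, so its indefinite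
  integral \<open>\<phi>\<close> is continuous and nondecreasing; it is affine with slope \<open>l\<^sub>i' / |I\<^sub>i|\<close>
  on \<open>I\<^sub>i\<close>, so \<open>\<phi>(I\<^sub>i)\<close> has length \<open>l\<^sub>i'\<close>; it is strictly increasing because the
  gaps are dense, hence a homeomorphism onto its image; and \<open>\<phi>(C)\<close> is null because on every
  \<open>[c, d]\<close> the disjoint images of the gaps already have total length \<open>\<phi>(d) - \<phi>(c)\<close>.
  For the circle, run the same construction on the angles of one turn starting at an endpoint of
  \<open>I\<^sub>0\<close>, and wrap the result around the circle whose circumference is the total new length.\<close>

section \<open>Stretching the gaps of the real line\<close>

lemma image_affinity_greaterThanLessThan:
  fixes m c :: real
  assumes "0 < m"
  shows "(\<lambda>x. m * x + c) ` {p<..<q} = {m * p + c<..<m * q + c}"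
proof (intro equalityI subsetI)
  fix y assume "y \<in> {m * p + c<..<m * q + c}"
  with assms show "y \<in> (\<lambda>x. m * x + c) ` {p<..<q}"
    by (intro image_eqI[of _ _ "(y - c) / m"]) (auto simp: field_simps)
qed (use assms in auto)

locale gap_intervals =
  fixes a b l :: "nat \<Rightarrow> real"
  assumes gap_nonempty: "a n < b n"
    and gaps_disjoint: "disjoint_family (\<lambda>n. {a n<..<b n})"
    and length_pos: "0 < l n"
    and summable_on_bounded: "bounded (\<Union>n\<in>S. {a n<..<b n}) \<Longrightarrow> l summable_on S"
begin

abbreviation gap :: "nat \<Rightarrow> real set" where "gap n \<equiv> {a n<..<b n}"

lemma gap_unique: "x \<in> gap n \<Longrightarrow> x \<in> gap m \<Longrightarrow> n = m"
  using gaps_disjoint unfolding disjoint_family_on_def by blast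

definition slope :: "nat \<Rightarrow> real" where "slope n = l n / (b n - a n)"

lemma slope_pos: "0 < slope n"
  using gap_nonempty[of n] length_pos[of n] by (simp add: slope_def)

lemma slope_times_length: "slope n * (b n - a n) = l n"
  using gap_nonempty[of n] by (simp add: slope_def)

definition gap_density :: "real \<Rightarrow> ennreal" where
  "gap_density x = (\<Sum>n. ennreal (slope n) * indicator (gap n) x)"

lemma gap_density_borel[measurable]: "gap_density \<in> borel_measurable borel"
  unfolding gap_density_def by measurable

lemma gap_density_in_gap: "x \<in> gap n \<Longrightarrow> gap_density x = ennreal (slope n)"
proof -
  assume x: "x \<in> gap n"
  have "gap_density x = (\<Sum>m\<in>{n}. ennreal (slope m) * indicator (gap m) x)"
    unfolding gap_density_def
    by (rule suminf_finite) (use x gap_unique in \<open>auto simp: indicator_def\<close>)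
  then show ?thesis using x by (simp only: sum.insert_if finite.emptyI sum.empty) simp
qed

lemma gap_density_outside: "x \<notin> (\<Union>n. gap n) \<Longrightarrow> gap_density x = 0"
  unfolding gap_density_def by auto

definition stretched :: "real measure" where "stretched = density lborel gap_density"

lemma sets_stretched[simp, measurable_cong]: "sets stretched = sets borel"
  by (simp add: stretched_def)

lemma emeasure_stretched:
  assumes [measurable]: "A \<in> sets borel"
  shows "emeasure stretched A = (\<Sum>n. ennreal (slope n) * emeasure lborel (gap n \<inter> A))"
proof -
  have "emeasure stretched A = (\<integral>\<^sup>+ x. gap_density x * indicator A x \<partial>lborel)"
    unfolding stretched_def by (rule emeasure_density) auto
  also have "\<dots> = (\<integral>\<^sup>+ x. (\<Sum>n. ennreal (slope n) * indicator (gap n \<inter> A) x) \<partial>lborel)"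
    unfolding gap_density_def
    by (intro nn_integral_cong)
       (simp add: ennreal_suminf_multc[symmetric] indicator_inter_arith mult.assoc)
  also have "\<dots> = (\<Sum>n. (\<integral>\<^sup>+ x. ennreal (slope n) * indicator (gap n \<inter> A) x \<partial>lborel))"
    by (rule nn_integral_suminf) auto
  also have "\<dots> = (\<Sum>n. ennreal (slope n) * emeasure lborel (gap n \<inter> A))"
    by (intro suminf_cong nn_integral_cmult_indicator) auto
  finally show ?thesis .
qed

lemma slope_mult_emeasure_gap_le: "ennreal (slope n) * emeasure lborel (gap n \<inter> A) \<le> ennreal (l n)"
proof -
  have "emeasure lborel (gap n \<inter> A) \<le> ennreal (b n - a n)"
    using emeasure_mono[of "gap n \<inter> A" "gap n" lborel] gap_nonempty[of n] by simp
  then have "ennreal (slope n) * emeasure lborel (gap n \<inter> A) \<le> ennreal (slope n) * ennreal (b n - a n)"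
    by (rule mult_left_mono) simp
  also have "\<dots> = ennreal (l n)"
    using gap_nonempty[of n] slope_pos[of n] by (simp add: ennreal_mult[symmetric] slope_times_length)
  finally show ?thesis .
qed

lemma bounded_gaps_meeting_Icc: "bounded (\<Union>n\<in>{n. gap n \<inter> {c..d} \<noteq> {}}. gap n)"
proof -
  have finite_gaps_at: "finite {n. x \<in> gap n}" for x
  proof (cases "\<exists>m. x \<in> gap m")
    case True
    then obtain m where "x \<in> gap m" by blast
    then have "{n. x \<in> gap n} \<subseteq> {m}" using gap_unique by blast
    then show ?thesis by (rule finite_subset) simp
  next
    case False
    then have "{n. x \<in> gap n} = {}" by blast
    then show ?thesis by (simp only: finite.emptyI)
  qed
  \<comment> \<open>a gap meeting [c, d] either lies inside it or contains one of its end points\<close>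
  have "(\<Union>n\<in>{n. gap n \<inter> {c..d} \<noteq> {}}. gap n)
        \<subseteq> {c..d} \<union> (\<Union>n\<in>{n. c \<in> gap n}. gap n) \<union> (\<Union>n\<in>{n. d \<in> gap n}. gap n)"
  proof
    fix z assume "z \<in> (\<Union>n\<in>{n. gap n \<inter> {c..d} \<noteq> {}}. gap n)"
    then obtain n y where y: "y \<in> gap n" "c \<le> y" "y \<le> d" and z: "z \<in> gap n" by force
    show "z \<in> {c..d} \<union> (\<Union>n\<in>{n. c \<in> gap n}. gap n) \<union> (\<Union>n\<in>{n. d \<in> gap n}. gap n)"
    proof (cases "c \<in> gap n \<or> d \<in> gap n")
      case True
      with z show ?thesis by blast
    next
      case False
      with y have "c \<le> a n" "b n \<le> d" by auto
      with z show ?thesis by auto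
    qed
  qed
  moreover have "bounded ({c..d} \<union> (\<Union>n\<in>{n. c \<in> gap n}. gap n) \<union> (\<Union>n\<in>{n. d \<in> gap n}. gap n))"
    using finite_gaps_at by (auto intro!: bounded_UN)
  ultimately show ?thesis by (rule bounded_subset[rotated])
qed

lemma emeasure_stretched_Icc_finite: "emeasure stretched {c..d} < \<infinity>"
proof -
  let ?S = "{n. gap n \<inter> {c..d} \<noteq> {}}"
  have "l summable_on ?S" by (rule summable_on_bounded[OF bounded_gaps_meeting_Icc])
  moreover have "(\<lambda>n. if n \<in> ?S then l n else 0) summable_on UNIV \<longleftrightarrow> l summable_on ?S"
    by (rule summable_on_cong_neutral) auto
  ultimately have summable: "summable (\<lambda>n. if n \<in> ?S then l n else 0)"
    using summable_on_imp_summable by auto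
  have "emeasure stretched {c..d} = (\<Sum>n. ennreal (slope n) * emeasure lborel (gap n \<inter> {c..d}))"
    by (rule emeasure_stretched) auto
  also have "\<dots> \<le> (\<Sum>n. ennreal (if n \<in> ?S then l n else 0))"
    by (intro suminf_le) (auto simp: slope_mult_emeasure_gap_le)
  also have "\<dots> = ennreal (\<Sum>n. if n \<in> ?S then l n else 0)"
    by (rule suminf_ennreal2) (use length_pos less_imp_le summable in auto)
  also have "\<dots> < \<infinity>" by simp
  finally show ?thesis .
qed

lemma emeasure_stretched_singleton: "emeasure stretched {x} = 0"
proof -
  have "emeasure lborel (gap n \<inter> {x}) = 0" for n
    using emeasure_mono[of "gap n \<inter> {x}" "{x}" lborel] by simp
  then show ?thesis by (simp add: emeasure_stretched)
qed

definition mass :: "real \<Rightarrow> real \<Rightarrow> real" where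
  "mass x y = enn2real (emeasure stretched {x<..y})"

lemma mass_nonneg: "0 \<le> mass x y"
  by (simp add: mass_def)

lemma emeasure_stretched_greaterThanAtMost: "emeasure stretched {x<..y} = ennreal (mass x y)"
proof -
  have "emeasure stretched {x<..y} \<le> emeasure stretched {x..y}"
    by (intro emeasure_mono) auto
  then have "emeasure stretched {x<..y} < \<infinity>"
    using emeasure_stretched_Icc_finite[of x y] by order
  then show ?thesis unfolding mass_def by (simp add: less_top)
qed

lemma emeasure_stretched_atLeastAtMost:
  assumes "x \<le> y"
  shows "emeasure stretched {x..y} = ennreal (mass x y)"
proof -
  have "emeasure stretched {x..y} = emeasure stretched {x} + emeasure stretched {x<..y}"
    using assms by (subst plus_emeasure) (auto intro!: arg_cong[where f = "emeasure stretched"])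
  then show ?thesis by (simp add: emeasure_stretched_singleton emeasure_stretched_greaterThanAtMost)
qed

lemma mass_add:
  assumes "x \<le> y" "y \<le> z"
  shows "mass x z = mass x y + mass y z"
proof -
  have "emeasure stretched {x<..z} = emeasure stretched {x<..y} + emeasure stretched {y<..z}"
    using assms by (subst plus_emeasure) (auto intro!: arg_cong[where f = "emeasure stretched"])
  then show ?thesis
    by (simp add: emeasure_stretched_greaterThanAtMost mass_nonneg ennreal_plus[symmetric]
        del: ennreal_plus)
qed

definition stretch :: "real \<Rightarrow> real \<Rightarrow> real" where
  "stretch x0 x = (if x0 \<le> x then mass x0 x else - mass x x0)"

lemma stretch_base: "stretch x0 x0 = 0"
  by (simp add: stretch_def mass_def)

lemma stretch_diff: "x \<le> y \<Longrightarrow> stretch x0 y - stretch x0 x = mass x y"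
  unfolding stretch_def using mass_add[of x0 x y] mass_add[of x y x0] mass_add[of x x0 y]
  by auto

lemma stretch_mono: "x \<le> y \<Longrightarrow> stretch x0 x \<le> stretch x0 y"
  using stretch_diff[of x y x0] mass_nonneg[of x y] by linarith

definition local_slope :: "real \<Rightarrow> real" where "local_slope x = enn2real (gap_density x)"

lemma gap_density_eq_local_slope: "gap_density x = ennreal (local_slope x)"
  unfolding local_slope_def
  by (cases "x \<in> (\<Union>n. gap n)") (auto simp: gap_density_in_gap gap_density_outside)

lemma has_integral_local_slope:
  assumes "c \<le> d"
  shows "(local_slope has_integral mass c d) {c..d}"
proof -
  let ?f = "\<lambda>x. local_slope x * indicator {c..d} x"
  have "(\<integral>\<^sup>+x. ennreal (?f x) \<partial>lborel) = (\<integral>\<^sup>+x. gap_density x * indicator {c..d} x \<partial>lborel)"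
    by (intro nn_integral_cong) (simp add: gap_density_eq_local_slope indicator_def)
  also have "\<dots> = emeasure stretched {c..d}"
    unfolding stretched_def by (rule emeasure_density[symmetric]) auto
  also have "\<dots> = ennreal (mass c d)" using assms by (rule emeasure_stretched_atLeastAtMost)
  finally have "(?f has_integral mass c d) UNIV"
    by (intro nn_integral_has_integral) (auto simp: local_slope_def mass_nonneg)
  moreover have "?f = (\<lambda>x. if x \<in> {c..d} then local_slope x else 0)"
    by (auto simp: indicator_def)
  ultimately show ?thesis
    using has_integral_restrict_UNIV[of "{c..d}" local_slope "mass c d"] by simp
qed

lemma continuous_stretch: "continuous_on S (stretch x0)"
proof (intro continuous_at_imp_continuous_on ballI)
  fix x :: real
  let ?c = "x - 1" and ?d = "x + 1"
  have "local_slope integrable_on {?c..?d}"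
    using has_integral_local_slope[of ?c ?d] by auto
  then have "continuous_on {?c..?d} (\<lambda>y. stretch x0 ?c + integral {?c..y} local_slope)"
    by (intro continuous_intros indefinite_integral_continuous_1)
  moreover have "stretch x0 ?c + integral {?c..y} local_slope = stretch x0 y" if "y \<in> {?c..?d}" for y
    using that stretch_diff[of ?c y x0] integral_unique[OF has_integral_local_slope[of ?c y]] by auto
  ultimately have "continuous_on {?c..?d} (stretch x0)"
    by (rule continuous_on_eq)
  then show "isCont (stretch x0) x"
    by (rule continuous_on_interior) auto
qed

lemma mass_in_gap:
  assumes "a n \<le> x" "x \<le> b n"
  shows "mass (a n) x = slope n * (x - a n)"
proof -
  have vanish: "emeasure lborel (gap m \<inter> {a n<..x}) = 0" if "m \<noteq> n" for m
  proof -
    have "gap m \<inter> {a n<..x} \<subseteq> {b n}"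
    proof
      fix y assume y: "y \<in> gap m \<inter> {a n<..x}"
      show "y \<in> {b n}"
      proof (rule ccontr)
        assume "y \<notin> {b n}"
        with y assms have "y \<in> gap n" by auto
        with y gap_unique that show False by blast
      qed
    qed
    then show ?thesis using emeasure_mono[of _ "{b n}" lborel] by (simp add: le_zero_eq)
  qed
  have own: "emeasure lborel (gap n \<inter> {a n<..x}) = ennreal (x - a n)"
  proof -
    have "gap n \<inter> {a n<..x} = (if x = b n then {a n<..<x} else {a n<..x})"
      using assms by auto
    then show ?thesis using assms by simp
  qed
  have "emeasure stretched {a n<..x} = (\<Sum>m\<in>{n}. ennreal (slope m) * emeasure lborel (gap m \<inter> {a n<..x}))"
    unfolding emeasure_stretched[of "{a n<..x}", simplified] by (rule suminf_finite) (auto simp: vanish)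
  with own have "emeasure stretched {a n<..x} = ennreal (slope n) * ennreal (x - a n)"
    by simp
  then show ?thesis
    using assms slope_pos[of n] by (simp add: mass_def ennreal_mult[symmetric])
qed

lemma stretch_affine_on_gap:
  "a n \<le> x \<Longrightarrow> x \<le> b n \<Longrightarrow> stretch x0 x = stretch x0 (a n) + slope n * (x - a n)"
  using stretch_diff[of "a n" x x0] mass_in_gap[of n x] by simp

lemma stretch_image_gap: "stretch x0 ` gap n = {stretch x0 (a n)<..<stretch x0 (a n) + l n}"
proof -
  have "stretch x0 x = slope n * x + (stretch x0 (a n) - slope n * a n)" if "x \<in> gap n" for x
    using that stretch_affine_on_gap[of n x x0] by (simp add: algebra_simps)
  then have "stretch x0 ` gap n = (\<lambda>x. slope n * x + (stretch x0 (a n) - slope n * a n)) ` gap n"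
    by (rule image_cong[OF refl])
  also have "\<dots> = {stretch x0 (a n)<..<stretch x0 (a n) + l n}"
    using slope_pos[of n] slope_times_length[of n]
    by (subst image_affinity_greaterThanLessThan) (auto simp: algebra_simps)
  finally show ?thesis .
qed

lemma mass_pos:
  assumes "x < y" "gap n \<inter> {x<..<y} \<noteq> {}"
  shows "0 < mass x y"
proof -
  let ?p = "max (a n) x" and ?q = "min (b n) y"
  have "?p < ?q" using assms by auto
  then have "0 < emeasure lborel {?p<..<?q}" by simp
  also have "\<dots> \<le> emeasure lborel (gap n \<inter> {x<..y})"
    by (intro emeasure_mono) auto
  finally have "0 < ennreal (slope n) * emeasure lborel (gap n \<inter> {x<..y})"
    using slope_pos[of n] by (simp add: ennreal_zero_less_mult_iff)
  also have "\<dots> \<le> (\<Sum>m. ennreal (slope m) * emeasure lborel (gap m \<inter> {x<..y}))"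
    using sum_le_suminf[of "\<lambda>m. ennreal (slope m) * emeasure lborel (gap m \<inter> {x<..y})" "{n}"]
    by auto
  also have "\<dots> = ennreal (mass x y)"
    by (simp add: emeasure_stretched[symmetric] emeasure_stretched_greaterThanAtMost)
  finally show ?thesis by simp
qed

lemma stretch_strict:
  "x < y \<Longrightarrow> gap n \<inter> {x<..<y} \<noteq> {} \<Longrightarrow> stretch x0 x < stretch x0 y"
  using mass_pos[of x y n] stretch_diff[of x y x0] by linarith

lemma stretch_separates:
  assumes "x \<in> gap n" "y \<notin> gap n"
  shows "stretch x0 x \<noteq> stretch x0 y"
proof (cases "x < y")
  case True
  with assms have "(x + b n) / 2 \<in> gap n \<inter> {x<..<y}" by auto
  then have "stretch x0 x < stretch x0 y" using stretch_strict[OF True] by blast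
  then show ?thesis by simp
next
  case False
  with assms have "y < x" by (cases "x = y") auto
  with assms have "(a n + x) / 2 \<in> gap n \<inter> {y<..<x}" by auto
  then have "stretch x0 y < stretch x0 x" using stretch_strict[OF \<open>y < x\<close>] by blast
  then show ?thesis by simp
qed

lemma strict_mono_on_stretch:
  assumes "is_interval S" "S \<subseteq> closure (\<Union>n. gap n)"
  shows "strict_mono_on S (stretch x0)"
proof (rule strict_mono_onI)
  fix x y assume "x \<in> S" "y \<in> S" "x < y"
  with assms(1) have "{x<..<y} \<subseteq> S"
    unfolding is_interval_1 by (meson greaterThanLessThan_iff less_imp_le subsetI)
  moreover have "(x + y) / 2 \<in> {x<..<y}" using \<open>x < y\<close> by simp
  ultimately have "(x + y) / 2 \<in> {x<..<y} \<inter> closure (\<Union>n. gap n)"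
    using assms(2) by blast
  then have "{x<..<y} \<inter> (\<Union>n. gap n) \<noteq> {}"
    using open_Int_closure_eq_empty[of "{x<..<y}" "\<Union>n. gap n"]
    by (metis empty_iff open_greaterThanLessThan)
  then obtain n where "gap n \<inter> {x<..<y} \<noteq> {}" by blast
  then show "stretch x0 x < stretch x0 y" by (rule stretch_strict[OF \<open>x < y\<close>])
qed

lemma stretch_image_gap_Int:
  assumes "A \<in> sets borel"
  shows "stretch x0 ` (gap n \<inter> A) \<in> sets lebesgue"
    and "emeasure lebesgue (stretch x0 ` (gap n \<inter> A)) = ennreal (slope n) * emeasure lborel (gap n \<inter> A)"
proof -
  have "stretch x0 x = slope n *\<^sub>R x + (stretch x0 (a n) - slope n * a n)" if "x \<in> gap n" for x
    using that stretch_affine_on_gap[of n x x0] by (simp add: algebra_simps)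
  then have affine: "stretch x0 ` (gap n \<inter> A)
      = (\<lambda>x. slope n *\<^sub>R x + (stretch x0 (a n) - slope n * a n)) ` (gap n \<inter> A)"
    by (intro image_cong) auto
  show "stretch x0 ` (gap n \<inter> A) \<in> sets lebesgue"
    unfolding affine using assms
    by (intro differentiable_image_in_sets_lebesgue derivative_intros) auto
  show "emeasure lebesgue (stretch x0 ` (gap n \<inter> A)) = ennreal (slope n) * emeasure lborel (gap n \<inter> A)"
    unfolding affine emeasure_lebesgue_affine using assms slope_pos[of n]
    by (simp add: emeasure_completion)
qed

lemma disjoint_family_stretch_image_gaps: "disjoint_family (\<lambda>n. stretch x0 ` (gap n \<inter> A))"
proof -
  have "stretch x0 x \<noteq> stretch x0 y" if "x \<in> gap m" "y \<in> gap n" "m \<noteq> n" for x y m n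
    using stretch_separates that gap_unique by blast
  then show ?thesis unfolding disjoint_family_on_def by blast
qed

lemma stretch_image_complement_Icc_subset:
  "stretch x0 ` ({c..d} - (\<Union>n. gap n))
    \<subseteq> {stretch x0 c..stretch x0 d} - (\<Union>n. stretch x0 ` (gap n \<inter> {c..d}))"
proof
  fix y assume "y \<in> stretch x0 ` ({c..d} - (\<Union>n. gap n))"
  then obtain x where x: "x \<in> {c..d}" "x \<notin> (\<Union>n. gap n)" "y = stretch x0 x" by auto
  have "y \<notin> stretch x0 ` (gap n \<inter> {c..d})" for n
  proof
    assume "y \<in> stretch x0 ` (gap n \<inter> {c..d})"
    then obtain x' where "x' \<in> gap n" "y = stretch x0 x'" by blast
    with x stretch_separates[where x = x' and n = n and y = x] show False by auto
  qed
  then show "y \<in> {stretch x0 c..stretch x0 d} - (\<Union>n. stretch x0 ` (gap n \<inter> {c..d}))"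
    using x stretch_mono[of c x x0] stretch_mono[of x d x0] by auto
qed

text \<open>The images of the gaps are disjoint intervals inside [stretch x0 c, stretch x0 d], and their
  total length is the mass of [c, d], i.e. the length of that whole interval.\<close>

lemma stretch_image_complement_Icc_null:
  "stretch x0 ` ({c..d} - (\<Union>n. gap n)) \<in> null_sets lebesgue"
proof (cases "c \<le> d")
  case False
  then show ?thesis by simp
next
  case cd: True
  let ?f = "stretch x0"
  define A where "A n = ?f ` (gap n \<inter> {c..d})" for n
  have A_sets: "A n \<in> sets lebesgue" for n
    unfolding A_def by (rule stretch_image_gap_Int) simp
  have A_emeasure: "emeasure lebesgue (A n) = ennreal (slope n) * emeasure lborel (gap n \<inter> {c..d})" for n
    unfolding A_def by (rule stretch_image_gap_Int) simp
  have "emeasure lebesgue (\<Union>n. A n) = (\<Sum>n. emeasure lebesgue (A n))"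
    using A_sets disjoint_family_stretch_image_gaps[of x0 "{c..d}"]
    by (intro suminf_emeasure[symmetric]) (auto simp: A_def)
  also have "\<dots> = emeasure stretched {c..d}"
    by (simp add: A_emeasure emeasure_stretched)
  also have "\<dots> = ennreal (?f d - ?f c)"
    using cd by (simp add: emeasure_stretched_atLeastAtMost stretch_diff)
  finally have A_fill: "emeasure lebesgue (\<Union>n. A n) = emeasure lebesgue {?f c..?f d}"
    using stretch_mono[OF cd] by simp
  have "emeasure lebesgue ({?f c..?f d} - (\<Union>n. A n))
        = emeasure lebesgue {?f c..?f d} - emeasure lebesgue (\<Union>n. A n)"
  proof (rule emeasure_Diff)
    show "emeasure lebesgue (\<Union>n. A n) \<noteq> \<infinity>" unfolding A_fill using stretch_mono[OF cd] by simp
    show "(\<Union>n. A n) \<subseteq> {?f c..?f d}" unfolding A_def using stretch_mono by auto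
  qed (use A_sets in auto)
  then have "{?f c..?f d} - (\<Union>n. A n) \<in> null_sets lebesgue"
    unfolding A_fill using A_sets stretch_mono[OF cd] by (auto simp: null_sets_def ennreal_minus)
  moreover have "?f ` ({c..d} - (\<Union>n. gap n)) \<subseteq> {?f c..?f d} - (\<Union>n. A n)"
    unfolding A_def by (rule stretch_image_complement_Icc_subset)
  ultimately show ?thesis by (rule null_sets_completion_subset[rotated])
qed

lemma stretch_image_complement_null:
  "stretch x0 ` (- (\<Union>n. gap n)) \<in> null_sets lebesgue"
proof -
  have "\<exists>k::nat. x \<in> {-real k..real k}" for x
  proof -
    obtain k :: nat where "\<bar>x\<bar> \<le> real k" using real_arch_simple by blast
    then show ?thesis by (intro exI[of _ k]) auto
  qed
  then have "- (\<Union>n. gap n) = (\<Union>k::nat. {-real k..real k} - (\<Union>n. gap n))"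
    by auto
  then have "stretch x0 ` (- (\<Union>n. gap n)) = (\<Union>k::nat. stretch x0 ` ({-real k..real k} - (\<Union>n. gap n)))"
    by (metis image_UN)
  then show ?thesis using stretch_image_complement_Icc_null by auto
qed

end

text \<open>The locale indexes the gaps by \<open>nat\<close> because the density is a series;
  families indexed by \<open>int\<close> are transported along \<open>int_decode\<close>.\<close>

lemma gap_intervals_int_decode:
  fixes a b l :: "int \<Rightarrow> real"
  assumes "\<And>i. a i < b i" "disjoint_family (\<lambda>i. {a i<..<b i})" "\<And>i. 0 < l i"
    and "\<And>S. bounded (\<Union>i\<in>S. {a i<..<b i}) \<Longrightarrow> l summable_on S"
  shows "gap_intervals (a \<circ> int_decode) (b \<circ> int_decode) (l \<circ> int_decode)"
proof
  show "disjoint_family (\<lambda>n. {(a \<circ> int_decode) n<..<(b \<circ> int_decode) n})"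
    using assms(2) by (auto simp: disjoint_family_on_def int_decode_eq)
next
  fix S :: "nat set"
  assume "bounded (\<Union>n\<in>S. {(a \<circ> int_decode) n<..<(b \<circ> int_decode) n})"
  then have "l summable_on int_decode ` S" by (intro assms(4)) simp
  then show "(l \<circ> int_decode) summable_on S"
    by (subst summable_on_reindex[symmetric]) (auto intro: inj_on_subset[OF inj_int_decode])
qed (use assms in auto)

lemma stretching_of_gaps:
  fixes a b l :: "int \<Rightarrow> real"
  assumes gaps: "\<And>i. a i < b i" "disjoint_family (\<lambda>i. {a i<..<b i})"
    and lengths: "\<And>i. 0 < l i" "\<forall>S. bounded (\<Union>i\<in>S. {a i<..<b i}) \<longrightarrow> l summable_on S"
  obtains f :: "real \<Rightarrow> real" where "continuous_on UNIV f" "f x0 = 0"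
    "\<And>S. is_interval S \<Longrightarrow> S \<subseteq> closure (\<Union>i. {a i<..<b i}) \<Longrightarrow> strict_mono_on S f"
    "\<And>i. f ` {a i<..<b i} = {f (a i)<..<f (a i) + l i}"
    "\<And>i. f (b i) = f (a i) + l i"
    "f ` (- (\<Union>i. {a i<..<b i})) \<in> null_sets lebesgue"
proof -
  interpret gap_intervals "a \<circ> int_decode" "b \<circ> int_decode" "l \<circ> int_decode"
    using gaps lengths(1) lengths(2)[rule_format] by (rule gap_intervals_int_decode)
  have all_gaps: "(\<Union>n. gap n) = (\<Union>i. {a i<..<b i})"
    by auto (metis int_encode_inverse)
  show ?thesis
  proof (rule that)
    show "continuous_on UNIV (stretch x0)" by (rule continuous_stretch)
    show "stretch x0 x0 = 0" by (rule stretch_base)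
    show "strict_mono_on S (stretch x0)"
      if "is_interval S" "S \<subseteq> closure (\<Union>i. {a i<..<b i})" for S
      using that by (intro strict_mono_on_stretch) (simp_all only: all_gaps)
    show "stretch x0 ` {a i<..<b i} = {stretch x0 (a i)<..<stretch x0 (a i) + l i}" for i
      using stretch_image_gap[of x0 "int_encode i"] by simp
    show "stretch x0 (b i) = stretch x0 (a i) + l i" for i
      using stretch_affine_on_gap[of "int_encode i" "b i" x0] slope_times_length[of "int_encode i"]
        gaps(1)[of i]
      by simp
    show "stretch x0 ` (- (\<Union>i. {a i<..<b i})) \<in> null_sets lebesgue"
      using stretch_image_complement_null[of x0] by (simp only: all_gaps)
  qed
qed

section \<open>The line models\<close>

lemma homeomorphism_onto_image_line_model:
  fixes f :: "real \<Rightarrow> real"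
  assumes "M \<in> line_models" "continuous_on (closure M) f" "inj_on f (closure M)"
  obtains g where "homeomorphism M (f ` M) f g"
proof (cases "M = UNIV")
  case True
  then show ?thesis using invariance_of_domain_homeomorphism[of M f] assms that by auto
next
  case False
  with assms(1) have "closure M = {0..1}" by (auto simp: line_models_def)
  with assms obtain g where "homeomorphism (closure M) (f ` closure M) f g"
    using homeomorphism_compact[of "closure M" f] by auto
  then show ?thesis by (meson closure_subset homeomorphism_of_subsets image_mono order_refl that)
qed

lemma line_model_stretching:
  fixes a b l :: "int \<Rightarrow> real"
  assumes M: "M \<in> line_models"
    and gaps: "\<And>i. a i < b i" "disjoint_family (\<lambda>i. {a i<..<b i})"
    and dense: "M \<subseteq> closure (\<Union>i. {a i<..<b i})"
    and lengths: "\<And>i. 0 < l i" "\<forall>S. bounded (\<Union>i\<in>S. {a i<..<b i}) \<longrightarrow> l summable_on S"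
  obtains \<phi> \<psi> :: "real \<Rightarrow> real" where "homeomorphism M (\<phi> ` M) \<phi> \<psi>"
    "\<And>i. emeasure lebesgue (\<phi> ` {a i<..<b i}) = l i"
    "\<phi> ` (M - (\<Union>i. {a i<..<b i})) \<in> null_sets lebesgue"
proof -
  obtain f :: "real \<Rightarrow> real" where cont: "continuous_on UNIV f" and "f 0 = 0"
    and strict: "\<And>S. is_interval S \<Longrightarrow> S \<subseteq> closure (\<Union>i. {a i<..<b i}) \<Longrightarrow> strict_mono_on S f"
    and image: "\<And>i. f ` {a i<..<b i} = {f (a i)<..<f (a i) + l i}"
    and "\<And>i. f (b i) = f (a i) + l i"
    and null: "f ` (- (\<Union>i. {a i<..<b i})) \<in> null_sets lebesgue"
    by (fact stretching_of_gaps[of a b l 0, OF gaps lengths])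
  have "is_interval (closure M)"
    using M by (auto simp: line_models_def is_interval_1)
  moreover have "closure M \<subseteq> closure (\<Union>i. {a i<..<b i})"
    using closure_mono[OF dense] by simp
  ultimately have "inj_on f (closure M)"
    by (intro strict_mono_on_imp_inj_on strict)
  then obtain \<psi> where "homeomorphism M (f ` M) f \<psi>"
    using homeomorphism_onto_image_line_model[OF M continuous_on_subset[OF cont]] by blast
  moreover have "emeasure lebesgue (f ` {a i<..<b i}) = l i" for i
    using image[of i] lengths(1)[of i] by simp
  moreover have "f ` (M - (\<Union>i. {a i<..<b i})) \<in> null_sets lebesgue"
    using null by (rule null_sets_completion_subset[rotated]) auto
  ultimately show ?thesis using that by blast
qed

section \<open>Angles on the unit circle\<close>

lemma cis_eq_imp_eq:
  assumes "cis s = cis t" "\<bar>s - t\<bar> < 2 * pi"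
  shows "s = t"
proof -
  have "exp (\<i> * of_real s) = exp (\<i> * of_real t)" using assms by (simp add: cis_conv_exp)
  then obtain n :: int where "\<i> * of_real s = \<i> * of_real t + (of_int (2 * n) * pi) * \<i>"
    by (auto simp: exp_eq)
  then have "Im (\<i> * of_real s) = Im (\<i> * of_real t + (of_int (2 * n) * pi) * \<i>)"
    by (rule arg_cong)
  then have st: "s = t + 2 * n * pi" by simp
  with assms have "\<bar>real_of_int n\<bar> < 1" by (simp add: abs_mult)
  then have "n = 0" by linarith
  with st show ?thesis by simp
qed

lemma cis_add_int_multiple_2pi: "cis (t + 2 * pi * of_int k) = cis t"
  by (simp add: cis_mult[symmetric])

definition angle_from :: "real \<Rightarrow> complex \<Rightarrow> real" where
  "angle_from t0 z = t0 + Arg2pi (z / cis t0)"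

lemma angle_from_bounds: "t0 \<le> angle_from t0 z" "angle_from t0 z < t0 + 2 * pi"
  using Arg2pi[of "z / cis t0"] by (auto simp: angle_from_def)

lemma cis_angle_from: "z \<in> sphere 0 1 \<Longrightarrow> cis (angle_from t0 z) = z"
proof -
  assume z: "z \<in> sphere 0 1"
  have "is_Arg (z / cis t0) (Arg2pi (z / cis t0))" using Arg2pi by blast
  then have "z / cis t0 = cis (Arg2pi (z / cis t0))"
    using z by (simp add: is_Arg_def cis_conv_exp norm_divide)
  then show ?thesis
    unfolding angle_from_def by (simp add: cis_mult[symmetric] field_simps)
qed

lemma angle_from_cis: "t0 \<le> t \<Longrightarrow> t < t0 + 2 * pi \<Longrightarrow> angle_from t0 (cis t) = t"
  by (rule cis_eq_imp_eq)
     (use angle_from_bounds[of t0 "cis t"] cis_angle_from[of "cis t" t0] in auto)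

lemma cis_image_full_turn: "cis ` {t0..t0 + 2 * pi} = sphere 0 1"
proof
  show "sphere 0 1 \<subseteq> cis ` {t0..t0 + 2 * pi}"
  proof
    fix z :: complex assume "z \<in> sphere 0 1"
    then have "z = cis (angle_from t0 z)" by (simp add: cis_angle_from)
    moreover have "angle_from t0 z \<in> {t0..t0 + 2 * pi}" using angle_from_bounds[of t0 z] by auto
    ultimately show "z \<in> cis ` {t0..t0 + 2 * pi}" by blast
  qed
qed auto

lemma cis_mem_arc_iff:
  assumes "t0 \<le> t" "t < t0 + 2 * pi" "t0 \<le> a" "b \<le> t0 + 2 * pi"
  shows "cis t \<in> cis ` {a<..<b} \<longleftrightarrow> t \<in> {a<..<b}"
proof
  assume "cis t \<in> cis ` {a<..<b}"
  then obtain s where s: "s \<in> {a<..<b}" "cis t = cis s" by auto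
  with assms have "\<bar>t - s\<bar> < 2 * pi" by auto
  with s have "t = s" by (intro cis_eq_imp_eq) auto
  with s show "t \<in> {a<..<b}" by simp
qed auto

lemma continuous_on_sphere_via_cis:
  fixes \<Phi> :: "complex \<Rightarrow> 'b::t2_space"
  assumes "continuous_on {t0..t0 + 2 * pi} (\<Phi> \<circ> cis)"
  shows "continuous_on (sphere 0 1) \<Phi>"
proof -
  have "quotient_map (top_of_set {t0..t0 + 2 * pi}) (top_of_set (sphere 0 1)) cis"
  proof (rule continuous_imp_quotient_map)
    show "continuous_map (top_of_set {t0..t0 + 2 * pi}) (top_of_set (sphere 0 1)) cis"
      using cis_image_full_turn[of t0]
      by (auto simp: continuous_map_in_subtopology intro!: continuous_intros)
  qed (auto simp: compact_space_subtopology Hausdorff_space_subtopology cis_image_full_turn)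
  moreover have "continuous_map (top_of_set {t0..t0 + 2 * pi}) euclidean (\<Phi> \<circ> cis)"
    using assms by simp
  ultimately have "continuous_map (top_of_set (sphere 0 1)) euclidean \<Phi>"
    by (rule continuous_compose_quotient_map)
  then show ?thesis by simp
qed

lemma cis_locally_onto:
  assumes "0 < e"
  obtains d where "0 < d" "\<And>u. u \<in> sphere 0 1 \<Longrightarrow> dist u (cis t) < d \<Longrightarrow> \<exists>s. \<bar>s\<bar> < e \<and> u = cis (t + s)"
proof -
  have "isCont Arg 1"
    by (rule continuous_at_Arg) (auto simp: complex_nonpos_Reals_iff)
  then obtain d where d: "0 < d" "\<And>z. dist z 1 < d \<Longrightarrow> dist (Arg z) (Arg 1) < e"
    using assms unfolding continuous_at_eps_delta by blast
  have "\<exists>s. \<bar>s\<bar> < e \<and> u = cis (t + s)" if u: "u \<in> sphere 0 1" "dist u (cis t) < d" for u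
  proof -
    let ?z = "u / cis t"
    have "?z - 1 = (u - cis t) / cis t" by (simp add: field_simps)
    then have "dist ?z 1 = dist u (cis t)" by (simp add: dist_norm norm_divide)
    with d u have "\<bar>Arg ?z\<bar> < e" by simp
    moreover have "?z \<noteq> 0" using u by auto
    then have "cis (Arg ?z) = ?z" using u by (simp add: cis_Arg sgn_div_norm norm_divide)
    then have "u = cis (t + Arg ?z)" by (simp add: cis_mult[symmetric] field_simps)
    ultimately show ?thesis by blast
  qed
  with d(1) show ?thesis by (rule that)
qed

lemma cis_image_shift: "cis ` {p + 2 * pi * of_int m<..<q + 2 * pi * of_int m} = cis ` {p<..<q}"
proof -
  have "{p + 2 * pi * of_int m<..<q + 2 * pi * of_int m} = (\<lambda>t. 1 * t + 2 * pi * of_int m) ` {p<..<q}"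
    by (subst image_affinity_greaterThanLessThan) auto
  then show ?thesis by (simp add: image_image cis_add_int_multiple_2pi)
qed

lemma arc_start_not_in_arcs:
  assumes "\<And>i. \<alpha> i < \<beta> i" "\<And>i. \<beta> i - \<alpha> i \<le> 2 * pi"
    and "disjoint_family (\<lambda>i. cis ` {\<alpha> i<..<\<beta> i})"
  shows "cis (\<alpha> k) \<notin> cis ` {\<alpha> i<..<\<beta> i}"
proof
  assume "cis (\<alpha> k) \<in> cis ` {\<alpha> i<..<\<beta> i}"
  then obtain t where t: "t \<in> {\<alpha> i<..<\<beta> i}" "cis (\<alpha> k) = cis t" by auto
  show False
  proof (cases "i = k")
    case True
    with t assms have "\<bar>t - \<alpha> k\<bar> < 2 * pi" by (smt (verit) greaterThanLessThan_iff)
    with t have "t = \<alpha> k" by (intro cis_eq_imp_eq) auto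
    with t True show False by simp
  next
    case False
    \<comment> \<open>points slightly after the start of arc k would lie in both arcs\<close>
    define e where "e = min (\<beta> i - t) (\<beta> k - \<alpha> k) / 2"
    have e: "0 < e" "e < \<beta> i - t" "e < \<beta> k - \<alpha> k"
      using t assms(1)[of k] by (auto simp: e_def)
    have "cis (\<alpha> k + e) = cis (t + e)" by (simp add: cis_mult[symmetric] t(2))
    moreover have "cis (t + e) \<in> cis ` {\<alpha> i<..<\<beta> i}" using t e by auto
    moreover have "cis (\<alpha> k + e) \<in> cis ` {\<alpha> k<..<\<beta> k}" using e by auto
    ultimately show False
      using assms(3) False unfolding disjoint_family_on_def by (metis IntI UNIV_I empty_iff)
  qed
qed

lemma arcs_within_one_turn:
  assumes "\<And>i. \<alpha> i < \<beta> i" "\<And>i. \<beta> i - \<alpha> i \<le> 2 * pi"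
    and "disjoint_family (\<lambda>i. cis ` {\<alpha> i<..<\<beta> i})"
  obtains a b where "\<And>i. \<alpha> k \<le> a i" "\<And>i. a i < b i" "\<And>i. b i \<le> \<alpha> k + 2 * pi"
    "\<And>i. cis ` {a i<..<b i} = cis ` {\<alpha> i<..<\<beta> i}"
proof -
  define m where "m i = \<lfloor>(\<alpha> i - \<alpha> k) / (2 * pi)\<rfloor>" for i
  define a where "a i = \<alpha> i - 2 * pi * m i" for i
  define b where "b i = \<beta> i - 2 * pi * m i" for i
  have "m i \<le> (\<alpha> i - \<alpha> k) / (2 * pi)" "(\<alpha> i - \<alpha> k) / (2 * pi) < m i + 1" for i
    unfolding m_def by linarith+
  then have m_bounds: "2 * pi * m i \<le> \<alpha> i - \<alpha> k" "\<alpha> i - \<alpha> k < 2 * pi * m i + 2 * pi" for i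
    by (simp_all add: field_simps)
  have a_ge: "\<alpha> k \<le> a i" for i using m_bounds(1)[of i] by (simp add: a_def)
  have a_less: "a i < \<alpha> k + 2 * pi" for i using m_bounds(2)[of i] by (simp add: a_def)
  have ab: "a i < b i" for i using assms(1)[of i] by (simp add: a_def b_def)
  have arcs: "cis ` {a i<..<b i} = cis ` {\<alpha> i<..<\<beta> i}" for i
    using cis_image_shift[of "a i" "m i" "b i"] by (simp add: a_def b_def)
  \<comment> \<open>a shifted arc starting in the window cannot pass its end, since cis (\<alpha> k) is in no arc\<close>
  have "b i \<le> \<alpha> k + 2 * pi" for i
  proof (rule ccontr)
    assume "\<not> b i \<le> \<alpha> k + 2 * pi"
    with a_less[of i] have "cis (\<alpha> k + 2 * pi) \<in> cis ` {\<alpha> i<..<\<beta> i}"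
      unfolding arcs[symmetric] by auto
    then show False
      using arc_start_not_in_arcs[of \<alpha> \<beta>, OF assms, of k i] by (simp add: cis_mult[symmetric])
  qed
  from a_ge ab this arcs show ?thesis by (rule that)
qed

lemma angles_dense_if_arcs_dense:
  assumes "\<And>i. t0 \<le> a i" "\<And>i. b i \<le> t0 + 2 * pi"
    and "sphere 0 1 \<subseteq> closure (\<Union>i. cis ` {a i<..<b i})"
  shows "{t0..t0 + 2 * pi} \<subseteq> closure (\<Union>i. {a i<..<b i})"
proof -
  have "t \<in> closure (\<Union>i. {a i<..<b i})" if t: "t0 < t" "t < t0 + 2 * pi" for t
  proof (unfold closure_approachable, intro allI impI)
    fix e :: real assume "0 < e"
    define e' where "e' = min e (min (t - t0) (t0 + 2 * pi - t))"
    have "0 < e'" using \<open>0 < e\<close> t by (simp add: e'_def)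
    then obtain d where d: "0 < d"
      "\<And>u. u \<in> sphere 0 1 \<Longrightarrow> dist u (cis t) < d \<Longrightarrow> \<exists>s. \<bar>s\<bar> < e' \<and> u = cis (t + s)"
      using cis_locally_onto[of e' t] by metis
    have "cis t \<in> closure (\<Union>i. cis ` {a i<..<b i})" using assms(3) by auto
    then obtain u where u: "u \<in> (\<Union>i. cis ` {a i<..<b i})" "dist u (cis t) < d"
      using d(1) by (meson closure_approachable)
    then obtain i where ui: "u \<in> cis ` {a i<..<b i}" by blast
    then have "u \<in> sphere 0 1" by auto
    with d u obtain s where s: "\<bar>s\<bar> < e'" "u = cis (t + s)" by blast
    then have "t0 < t + s" "t + s < t0 + 2 * pi" "\<bar>s\<bar> < e" by (auto simp: e'_def)
    with ui s assms(1,2)[of i] have "t + s \<in> {a i<..<b i}"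
      using cis_mem_arc_iff[of t0 "t + s" "a i" "b i"] by simp
    with \<open>\<bar>s\<bar> < e\<close> show "\<exists>x'\<in>\<Union>i. {a i<..<b i}. dist x' t < e"
      by (intro bexI[of _ "t + s"]) (auto simp: dist_real_def)
  qed
  then have "{t0<..<t0 + 2 * pi} \<subseteq> closure (\<Union>i. {a i<..<b i})" by auto
  then have "closure {t0<..<t0 + 2 * pi} \<subseteq> closure (\<Union>i. {a i<..<b i})"
    using closure_minimal by blast
  then show ?thesis by simp
qed

section \<open>Stretching the circle\<close>

lemma image_greaterThanLessThan_in_borel:
  fixes f :: "real \<Rightarrow> 'a::t2_space"
  assumes "continuous_on {p<..<q} f"
  shows "f ` {p<..<q} \<in> sets borel"
proof -
  define K where "K n = {p + 1/(real n+1)..q - 1/(real n+1)}" for n :: nat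
  have K_sub: "K n \<subseteq> {p<..<q}" for n
  proof
    fix x assume "x \<in> K n"
    then have "p + 1/(real n+1) \<le> x" "x \<le> q - 1/(real n+1)" by (simp_all add: K_def)
    moreover have "0 < 1 / (real n + 1)" by simp
    ultimately show "x \<in> {p<..<q}" unfolding greaterThanLessThan_iff by linarith
  qed
  have "{p<..<q} \<subseteq> (\<Union>n. K n)"
  proof
    fix x assume "x \<in> {p<..<q}"
    then have "0 < min (x - p) (q - x)" by simp
    then obtain n :: nat where "inverse (real (Suc n)) < min (x - p) (q - x)"
      using reals_Archimedean by blast
    then have "x \<in> K n" by (simp add: K_def inverse_eq_divide add.commute)
    then show "x \<in> (\<Union>n. K n)" by blast
  qed
  with K_sub have "{p<..<q} = (\<Union>n. K n)" by blast
  then have "f ` {p<..<q} = (\<Union>n. f ` K n)" by (simp add: image_UN)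
  moreover have "f ` K n \<in> sets borel" for n
    using K_sub by (intro borel_closed compact_imp_closed compact_continuous_image
        continuous_on_subset[OF assms]) (auto simp: K_def)
  ultimately show ?thesis by auto
qed

definition arc_point :: "real \<Rightarrow> real \<Rightarrow> complex" where
  "arc_point r s = of_real r * cis (s / r)"

lemma circle_measure_eq_distr: "circle_measure r = distr (restrict_space lborel {0..<2*pi*r}) borel (arc_point r)"
  by (simp add: circle_measure_def arc_point_def[abs_def])

lemma continuous_on_arc_point: "continuous_on S (arc_point r)"
  unfolding arc_point_def by (cases "r = 0") (auto intro!: continuous_intros)

lemma norm_arc_point: "0 < r \<Longrightarrow> norm (arc_point r s) = r"
  by (simp add: arc_point_def norm_mult)

lemma arc_point_full_turn: "0 < r \<Longrightarrow> arc_point r (2 * pi * r) = arc_point r 0"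
  by (simp add: arc_point_def)

lemma arc_point_inj:
  assumes "0 < r" "s \<in> {0..<2*pi*r}" "s' \<in> {0..<2*pi*r}" "arc_point r s = arc_point r s'"
  shows "s = s'"
proof -
  have "cis (s / r) = cis (s' / r)" using assms by (simp add: arc_point_def)
  moreover have "\<bar>s / r - s' / r\<bar> < 2 * pi"
  proof -
    have "\<bar>s - s'\<bar> < 2 * pi * r" using assms(2,3) by auto
    then have "\<bar>s - s'\<bar> / r < 2 * pi" using assms(1) by (simp add: divide_less_eq)
    then show ?thesis using assms(1) by (simp add: diff_divide_distrib[symmetric])
  qed
  ultimately have "s / r = s' / r" by (rule cis_eq_imp_eq)
  then show ?thesis using assms by simp
qed

lemma arc_point_Arg2pi: "0 < r \<Longrightarrow> w \<in> sphere 0 r \<Longrightarrow> arc_point r (r * Arg2pi w) = w"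
  using Arg2pi[of w] by (simp add: is_Arg_def arc_point_def cis_conv_exp)

lemma Arg2pi_arc_length_bounds: "0 < r \<Longrightarrow> r * Arg2pi w \<in> {0..<2*pi*r}"
  using Arg2pi[of w] by auto

lemma sets_circle_measure[simp, measurable_cong]: "sets (circle_measure r) = sets borel"
  by (simp add: circle_measure_def)

lemma emeasure_circle_measure:
  assumes "B \<in> sets borel"
  shows "emeasure (circle_measure r) B = emeasure lborel ({0..<2*pi*r} \<inter> arc_point r -` B)"
proof -
  have "arc_point r \<in> measurable (restrict_space lborel {0..<2*pi*r}) borel"
    by (rule measurable_restrict_space1)
       (simp add: borel_measurable_continuous_onI continuous_on_arc_point)
  then show ?thesis
    unfolding circle_measure_eq_distr using assms
    by (simp add: emeasure_distr emeasure_restrict_space Int_commute)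
qed

lemma emeasure_circle_measure_arc:
  assumes "0 < r" "0 \<le> p" "p \<le> q" "q \<le> 2*pi*r"
  shows "emeasure (circle_measure r) (arc_point r ` {p<..<q}) = ennreal (q - p)"
proof -
  have "arc_point r ` {p<..<q} \<in> sets borel"
    by (intro image_greaterThanLessThan_in_borel continuous_on_arc_point)
  moreover have "{0..<2*pi*r} \<inter> arc_point r -` (arc_point r ` {p<..<q}) = {p<..<q}"
  proof (intro set_eqI iffI)
    fix s assume "s \<in> {0..<2*pi*r} \<inter> arc_point r -` (arc_point r ` {p<..<q})"
    then obtain k where "s \<in> {0..<2*pi*r}" "k \<in> {p<..<q}" "arc_point r s = arc_point r k"
      by auto
    moreover from this have "s = k" using assms by (intro arc_point_inj) auto
    ultimately show "s \<in> {p<..<q}" by simp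
  qed (use assms in auto)
  ultimately show ?thesis using assms by (simp add: emeasure_circle_measure)
qed

lemma circle_measure_null_if_covered:
  assumes "0 < r" "B \<in> sets borel" "B \<subseteq> arc_point r ` N" "N \<subseteq> {0..2*pi*r}"
    and "N \<in> null_sets lebesgue"
  shows "B \<in> null_sets (circle_measure r)"
proof -
  \<comment> \<open>the end point of the parameter interval is identified with 0\<close>
  have "{0..<2*pi*r} \<inter> arc_point r -` B \<subseteq> N \<union> {0}"
  proof
    fix s assume s: "s \<in> {0..<2*pi*r} \<inter> arc_point r -` B"
    with assms(3) obtain n where n: "n \<in> N" "arc_point r s = arc_point r n" by auto
    show "s \<in> N \<union> {0}"
    proof (cases "n = 2*pi*r")
      case True
      with n have "arc_point r s = arc_point r 0" by (simp add: arc_point_full_turn[OF assms(1)])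
      with s assms(1) have "s = 0" by (intro arc_point_inj) auto
      then show ?thesis by simp
    next
      case False
      with n assms(4) have "n \<in> {0..<2*pi*r}" by auto
      with s n assms(1) have "s = n" by (intro arc_point_inj) auto
      with n show ?thesis by simp
    qed
  qed
  moreover have "N \<union> {0} \<in> null_sets lebesgue" using assms(5) by simp
  ultimately have "{0..<2*pi*r} \<inter> arc_point r -` B \<in> null_sets lebesgue"
    by (rule null_sets_completion_subset)
  moreover have "arc_point r -` B \<in> sets borel"
    using measurable_sets[OF borel_measurable_continuous_onI[OF continuous_on_arc_point] assms(2)]
    by simp
  ultimately have "emeasure lborel ({0..<2*pi*r} \<inter> arc_point r -` B) = 0"
    by (simp add: null_sets_def)
  then show ?thesis using assms(2) by (simp add: null_sets_def emeasure_circle_measure)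
qed

locale circle_wrapping =
  fixes t0 r :: real and f :: "real \<Rightarrow> real"
  assumes continuous: "continuous_on {t0..t0 + 2*pi} f"
    and strict_mono: "strict_mono_on {t0..t0 + 2*pi} f"
    and start: "f t0 = 0" and full_turn: "f (t0 + 2*pi) = 2*pi*r"
begin

definition wrap :: "complex \<Rightarrow> complex" where
  "wrap z = arc_point r (f (angle_from t0 z))"

lemma radius_pos: "0 < r"
proof -
  have "f t0 < f (t0 + 2*pi)" using strict_mono by (rule strict_mono_onD) auto
  then show ?thesis using start full_turn by (simp add: zero_less_mult_iff)
qed

lemma f_range: "t \<in> {t0..t0 + 2*pi} \<Longrightarrow> f t \<in> {0..2*pi*r}"
  using start full_turn strict_mono_on_leD[OF strict_mono, of t0 t]
    strict_mono_on_leD[OF strict_mono, of t "t0 + 2*pi"]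
  by auto

lemma f_range_before_full_turn: "t \<in> {t0..<t0 + 2*pi} \<Longrightarrow> f t \<in> {0..<2*pi*r}"
  using start full_turn strict_mono_on_leD[OF strict_mono, of t0 t]
    strict_mono_onD[OF strict_mono, of t "t0 + 2*pi"]
  by auto

lemma wrap_cis: "t \<in> {t0..t0 + 2*pi} \<Longrightarrow> wrap (cis t) = arc_point r (f t)"
proof (cases "t = t0 + 2*pi")
  case True
  have "angle_from t0 (cis t) = t0"
    using True angle_from_cis[of t0 t0] by (simp add: cis_mult[symmetric])
  then show ?thesis
    using True start full_turn by (simp add: wrap_def arc_point_full_turn[OF radius_pos])
next
  case False
  then show "t \<in> {t0..t0 + 2*pi} \<Longrightarrow> ?thesis" by (simp add: wrap_def angle_from_cis)
qed

lemma continuous_on_wrap: "continuous_on (sphere 0 1) wrap"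
proof (rule continuous_on_sphere_via_cis)
  have "continuous_on {t0..t0 + 2*pi} (arc_point r \<circ> f)"
    by (intro continuous_on_compose continuous continuous_on_arc_point)
  then show "continuous_on {t0..t0 + 2*pi} (wrap \<circ> cis)"
    by (rule continuous_on_eq) (simp add: wrap_cis)
qed

lemma inj_on_wrap: "inj_on wrap (sphere 0 1)"
proof (rule inj_onI)
  fix z1 z2 :: complex assume z: "z1 \<in> sphere 0 1" "z2 \<in> sphere 0 1" "wrap z1 = wrap z2"
  let ?t1 = "angle_from t0 z1" and ?t2 = "angle_from t0 z2"
  have "f ?t1 = f ?t2"
    using z(3) f_range_before_full_turn angle_from_bounds unfolding wrap_def
    by (intro arc_point_inj[OF radius_pos]) auto
  then have "?t1 = ?t2"
    by (rule inj_onD[OF strict_mono_on_imp_inj_on[OF strict_mono]])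
       (use angle_from_bounds[of t0 z1] angle_from_bounds[of t0 z2] in auto)
  then show "z1 = z2" using cis_angle_from z by metis
qed

lemma wrap_sphere: "wrap ` sphere 0 1 = sphere 0 r"
proof
  show "wrap ` sphere 0 1 \<subseteq> sphere 0 r"
    using norm_arc_point[OF radius_pos] by (auto simp: wrap_def)
  show "sphere 0 r \<subseteq> wrap ` sphere 0 1"
  proof
    fix w :: complex assume w: "w \<in> sphere 0 r"
    have "r * Arg2pi w \<in> {0..<2*pi*r}" using Arg2pi_arc_length_bounds[OF radius_pos] .
    then obtain t where t: "t \<in> {t0..t0 + 2*pi}" "f t = r * Arg2pi w"
      using IVT'[of f t0 "r * Arg2pi w" "t0 + 2*pi"] continuous start full_turn by auto
    then have "wrap (cis t) = w" using wrap_cis arc_point_Arg2pi[OF radius_pos w] by simp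
    then show "w \<in> wrap ` sphere 0 1" by (metis image_eqI mem_sphere_0 norm_cis)
  qed
qed

lemma homeomorphism_wrap:
  obtains \<psi> where "homeomorphism (sphere 0 1) (sphere 0 r) wrap \<psi>"
  using homeomorphism_compact[OF compact_sphere continuous_on_wrap wrap_sphere inj_on_wrap] by blast

lemma wrap_image_complement_null:
  fixes a b :: "'i::countable \<Rightarrow> real"
  assumes arcs_borel: "\<And>i. wrap ` cis ` {a i<..<b i} \<in> sets borel"
    and null: "f ` ({t0..t0 + 2*pi} - (\<Union>i. {a i<..<b i})) \<in> null_sets lebesgue"
  shows "wrap ` (sphere 0 1 - (\<Union>i. cis ` {a i<..<b i})) \<in> null_sets (circle_measure r)"
proof (rule circle_measure_null_if_covered[OF radius_pos _ _ _ null])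
  let ?C = "sphere 0 1 - (\<Union>i. cis ` {a i<..<b i})"
  have "wrap ` ?C = sphere 0 r - (\<Union>i. wrap ` cis ` {a i<..<b i})"
    using inj_on_wrap wrap_sphere by (subst inj_on_image_set_diff) (auto simp: image_UN)
  moreover have "(\<Union>i. wrap ` cis ` {a i<..<b i}) \<in> sets borel"
    using arcs_borel by (intro sets.countable_UN') auto
  moreover have "sphere (0::complex) r \<in> sets borel" by (intro borel_closed) auto
  ultimately show "wrap ` ?C \<in> sets borel" by simp
  show "wrap ` ?C \<subseteq> arc_point r ` f ` ({t0..t0 + 2*pi} - (\<Union>i. {a i<..<b i}))"
  proof
    fix w assume "w \<in> wrap ` ?C"
    then obtain z where z: "z \<in> sphere 0 1" "z \<notin> (\<Union>i. cis ` {a i<..<b i})" "w = wrap z"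
      by auto
    let ?t = "angle_from t0 z"
    have t: "t0 \<le> ?t" "?t < t0 + 2*pi" by (rule angle_from_bounds)+
    have "?t \<notin> (\<Union>i. {a i<..<b i})"
    proof
      assume "?t \<in> (\<Union>i. {a i<..<b i})"
      then obtain i where "cis ?t \<in> cis ` {a i<..<b i}" by blast
      with z cis_angle_from[OF z(1)] show False by auto
    qed
    moreover have "w = arc_point r (f ?t)" using z(3) by (simp add: wrap_def)
    ultimately show "w \<in> arc_point r ` f ` ({t0..t0 + 2*pi} - (\<Union>i. {a i<..<b i}))"
      using t by auto
  qed
  show "f ` ({t0..t0 + 2*pi} - (\<Union>i. {a i<..<b i})) \<subseteq> {0..2*pi*r}"
    using f_range by auto
qed

end

lemma circle_stretching_of_angle_gaps:
  fixes a b l :: "int \<Rightarrow> real"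
  assumes window: "\<And>i. t0 \<le> a i" "\<And>i. b i \<le> t0 + 2*pi"
    and gaps: "\<And>i. a i < b i" "disjoint_family (\<lambda>i. {a i<..<b i})"
    and dense: "{t0..t0 + 2*pi} \<subseteq> closure (\<Union>i. {a i<..<b i})"
    and lengths: "\<And>i. 0 < l i" "l summable_on UNIV"
  obtains r and \<Phi> \<psi> :: "complex \<Rightarrow> complex" where "0 < r"
    "homeomorphism (sphere 0 1) (sphere 0 r) \<Phi> \<psi>"
    "\<And>i. emeasure (circle_measure r) (\<Phi> ` cis ` {a i<..<b i}) = l i"
    "\<Phi> ` (sphere 0 1 - (\<Union>i. cis ` {a i<..<b i})) \<in> null_sets (circle_measure r)"
proof -
  have summable: "\<forall>S. bounded (\<Union>i\<in>S. {a i<..<b i}) \<longrightarrow> l summable_on S"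
    using summable_on_subset_banach[OF lengths(2)] by blast
  obtain f :: "real \<Rightarrow> real" where cont: "continuous_on UNIV f" and start: "f t0 = 0"
    and strict: "\<And>S. is_interval S \<Longrightarrow> S \<subseteq> closure (\<Union>i. {a i<..<b i}) \<Longrightarrow> strict_mono_on S f"
    and image: "\<And>i. f ` {a i<..<b i} = {f (a i)<..<f (a i) + l i}"
    and gap_end: "\<And>i. f (b i) = f (a i) + l i"
    and null: "f ` (- (\<Union>i. {a i<..<b i})) \<in> null_sets lebesgue"
    by (fact stretching_of_gaps[of a b l t0, OF gaps lengths(1) summable])
  define r where "r = f (t0 + 2*pi) / (2*pi)"
  interpret circle_wrapping t0 r f
  proof
    show "continuous_on {t0..t0 + 2*pi} f" using cont by (rule continuous_on_subset) simp
    show "strict_mono_on {t0..t0 + 2*pi} f" using dense by (intro strict) (auto simp: is_interval_1)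
  qed (simp_all add: start r_def)
  have wrap_arc: "wrap ` cis ` {a i<..<b i} = arc_point r ` {f (a i)<..<f (a i) + l i}" for i
  proof -
    have "wrap ` cis ` {a i<..<b i} = (\<lambda>t. arc_point r (f t)) ` {a i<..<b i}"
      unfolding image_image using window[of i] by (intro image_cong) (auto simp: wrap_cis)
    then show ?thesis by (simp add: image_image[symmetric] image)
  qed
  have "emeasure (circle_measure r) (wrap ` cis ` {a i<..<b i}) = l i" for i
  proof -
    have "f (a i) \<in> {0..2*pi*r}" "f (b i) \<in> {0..2*pi*r}"
      using f_range window[of i] gaps(1)[of i] by (auto intro: less_imp_le)
    then show ?thesis
      unfolding wrap_arc using radius_pos lengths(1)[of i] gap_end[of i]
      by (subst emeasure_circle_measure_arc) auto
  qed
  moreover have "wrap ` (sphere 0 1 - (\<Union>i. cis ` {a i<..<b i})) \<in> null_sets (circle_measure r)"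
  proof (rule wrap_image_complement_null)
    show "wrap ` cis ` {a i<..<b i} \<in> sets borel" for i
      unfolding wrap_arc by (intro image_greaterThanLessThan_in_borel continuous_on_arc_point)
    show "f ` ({t0..t0 + 2*pi} - (\<Union>i. {a i<..<b i})) \<in> null_sets lebesgue"
      using null by (rule null_sets_completion_subset[rotated]) auto
  qed
  moreover obtain \<psi> where "homeomorphism (sphere 0 1) (sphere 0 r) wrap \<psi>"
    by (rule homeomorphism_wrap)
  ultimately show ?thesis using radius_pos that by blast
qed

lemma circle_stretching:
  fixes \<alpha> \<beta> l :: "int \<Rightarrow> real"
  assumes arcs: "\<And>i. \<alpha> i < \<beta> i" "\<And>i. \<beta> i - \<alpha> i \<le> 2*pi" "disjoint_family (\<lambda>i. cis ` {\<alpha> i<..<\<beta> i})"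
    and dense: "sphere 0 1 \<subseteq> closure (\<Union>i. cis ` {\<alpha> i<..<\<beta> i})"
    and lengths: "\<And>i. 0 < l i" "l summable_on UNIV"
  obtains r and \<Phi> \<psi> :: "complex \<Rightarrow> complex" where "0 < r"
    "homeomorphism (sphere 0 1) (sphere 0 r) \<Phi> \<psi>"
    "\<And>i. emeasure (circle_measure r) (\<Phi> ` cis ` {\<alpha> i<..<\<beta> i}) = l i"
    "\<Phi> ` (sphere 0 1 - (\<Union>i. cis ` {\<alpha> i<..<\<beta> i})) \<in> null_sets (circle_measure r)"
proof -
  obtain a b where start: "\<And>i. \<alpha> 0 \<le> a i" and ab: "\<And>i. a i < b i"
    and stop: "\<And>i. b i \<le> \<alpha> 0 + 2*pi" and arc_eq: "\<And>i. cis ` {a i<..<b i} = cis ` {\<alpha> i<..<\<beta> i}"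
    by (fact arcs_within_one_turn[of \<alpha> \<beta>, OF arcs, of 0])
  have disj: "disjoint_family (\<lambda>i. {a i<..<b i})"
    using arcs(3) unfolding disjoint_family_on_def arc_eq[symmetric] by blast
  have dense_angles: "{\<alpha> 0..\<alpha> 0 + 2*pi} \<subseteq> closure (\<Union>i. {a i<..<b i})"
    using start stop dense by (intro angles_dense_if_arcs_dense) (auto simp: arc_eq)
  obtain r and \<Phi> \<psi> :: "complex \<Rightarrow> complex" where "0 < r"
    "homeomorphism (sphere 0 1) (sphere 0 r) \<Phi> \<psi>"
    "\<And>i. emeasure (circle_measure r) (\<Phi> ` cis ` {a i<..<b i}) = l i"
    "\<Phi> ` (sphere 0 1 - (\<Union>i. cis ` {a i<..<b i})) \<in> null_sets (circle_measure r)"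
    by (fact circle_stretching_of_angle_gaps[of "\<alpha> 0" a b l, OF start stop ab disj dense_angles lengths])
  with that show ?thesis unfolding arc_eq by blast
qed

theorem lemma2p4:
  shows
  "(\<forall>(M::real set) (I::int \<Rightarrow> real set) (l'::int \<Rightarrow> real).
      M \<in> line_models \<and>
      (\<forall>i. \<exists>a b. a < b \<and> I i = {a<..<b}) \<and>
      (\<forall>i. I i \<subseteq> M) \<and>
      (\<forall>i j. i \<noteq> j \<longrightarrow> I i \<inter> I j = {}) \<and>
      M \<subseteq> closure (\<Union>i. I i) \<and>
      (\<forall>i. l' i > 0) \<and>
      (\<forall>S. (\<exists>c d. (\<Union>i\<in>S. I i) \<subseteq> {c..d}) \<longrightarrow> l' summable_on S)
    \<longrightarrow> (\<exists>(\<phi>::real \<Rightarrow> real) \<psi>.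
          homeomorphism M (\<phi> ` M) \<phi> \<psi> \<and>
          (\<forall>i. emeasure lebesgue (\<phi> ` I i) = ennreal (l' i)) \<and>
          \<phi> ` (M - (\<Union>i. I i)) \<in> null_sets lebesgue))
   \<and>
   (\<forall>(I::int \<Rightarrow> complex set) (l'::int \<Rightarrow> real).
      (\<forall>i. \<exists>\<alpha> \<beta>. \<alpha> < \<beta> \<and> \<beta> - \<alpha> \<le> 2*pi \<and> I i = cis ` {\<alpha><..<\<beta>}) \<and>
      (\<forall>i j. i \<noteq> j \<longrightarrow> I i \<inter> I j = {}) \<and>
      sphere 0 1 \<subseteq> closure (\<Union>i. I i) \<and>
      (\<forall>i. l' i > 0) \<and>
      (\<forall>S. (\<exists>\<alpha> \<beta>. \<beta> - \<alpha> \<le> 2*pi \<and> (\<Union>i\<in>S. I i) \<subseteq> cis ` {\<alpha>..\<beta>}) \<longrightarrow> l' summable_on S)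
    \<longrightarrow> (\<exists>(r::real) (\<phi>::complex \<Rightarrow> complex) \<psi>. r > 0 \<and>
          homeomorphism (sphere 0 1) (sphere 0 r) \<phi> \<psi> \<and>
          (\<forall>i. emeasure (circle_measure r) (\<phi> ` I i) = ennreal (l' i)) \<and>
          \<phi> ` (sphere 0 1 - (\<Union>i. I i)) \<in> null_sets (circle_measure r)))"
proof (intro conjI allI impI, goal_cases line circle)
  case (line M I l')
  then obtain a b where ab: "\<And>i. a i < b i" and I: "\<And>i. I i = {a i<..<b i}" by metis
  from line have M: "M \<in> line_models" and pos: "\<And>i. 0 < l' i"
    and disj: "disjoint_family (\<lambda>i. I i)" and dense: "M \<subseteq> closure (\<Union>i. I i)"
    by (auto simp: disjoint_family_on_def)
  have summ: "\<forall>S. bounded (\<Union>i\<in>S. I i) \<longrightarrow> l' summable_on S"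
  proof (intro allI impI)
    fix S assume "bounded (\<Union>i\<in>S. I i)"
    then obtain c where "\<forall>x\<in>(\<Union>i\<in>S. I i). \<bar>x\<bar> \<le> c" unfolding bounded_real by blast
    then have "(\<Union>i\<in>S. I i) \<subseteq> {-c..c}" by force
    with line show "l' summable_on S" by blast
  qed
  obtain \<phi> \<psi> :: "real \<Rightarrow> real" where "homeomorphism M (\<phi> ` M) \<phi> \<psi>"
    "\<And>i. emeasure lebesgue (\<phi> ` {a i<..<b i}) = l' i"
    "\<phi> ` (M - (\<Union>i. {a i<..<b i})) \<in> null_sets lebesgue"
    by (fact line_model_stretching[OF M ab disj[unfolded I] dense[unfolded I] pos summ[unfolded I]])
  then show ?case unfolding I by blast
next
  case (circle I l')
  then obtain \<alpha> \<beta> where arcs: "\<And>i. \<alpha> i < \<beta> i" "\<And>i. \<beta> i - \<alpha> i \<le> 2*pi"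
    and I: "\<And>i. I i = cis ` {\<alpha> i<..<\<beta> i}" by metis
  have "(\<Union>i\<in>UNIV. I i) \<subseteq> cis ` {0..0 + 2*pi}" unfolding cis_image_full_turn I by auto
  with circle have summ: "l' summable_on UNIV" by (metis add_diff_cancel_left' order_refl)
  from circle have pos: "\<And>i. 0 < l' i" and disj: "disjoint_family (\<lambda>i. I i)"
    and dense: "sphere 0 1 \<subseteq> closure (\<Union>i. I i)"
    by (auto simp: disjoint_family_on_def)
  obtain r and \<Phi> \<psi> :: "complex \<Rightarrow> complex" where "0 < r"
    "homeomorphism (sphere 0 1) (sphere 0 r) \<Phi> \<psi>"
    "\<And>i. emeasure (circle_measure r) (\<Phi> ` cis ` {\<alpha> i<..<\<beta> i}) = l' i"
    "\<Phi> ` (sphere 0 1 - (\<Union>i. cis ` {\<alpha> i<..<\<beta> i})) \<in> null_sets (circle_measure r)"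
    by (fact circle_stretching[OF arcs disj[unfolded I] dense[unfolded I] pos summ])
  then show ?case unfolding I by blast
qed

end
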